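(* Let $R$ be a $*$-ring. The following are equivalent: (1) $R$ is $*$-clean and $2\in U(R)$; (2) every element of $R$ is a sum of a unit and an element $t$ with $t^2=1$ and $t^*=t$.
   Context: A $*$-ring is a ring with identity with an involution $*$. A projection is $p$ with $p^2=p=p^*$. $R$ is $*$-clean if every element is a sum of a projection and a unit. $U(R)$ is the unit group. *)

theory Defs
  imports Main
begin

definition ring_involution :: "('a::ring_1 \<Rightarrow> 'a) \<Rightarrow> bool" where
  "ring_involution st \<longleftrightarrow>
     (\<forall>x y. st (x + y) = st x + st y) \<and>
     (\<forall>x y. st (x * y) = st y * st x) \<and>
     (\<forall>x. st (st x) = x)"

definition ring_unit :: "'a::ring_1 \<Rightarrow> bool" where
  "ring_unit u \<longleftrightarrow> (\<exists>v. u * v = 1 \<and> v * u = 1)"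

definition is_projection :: "('a::ring_1 \<Rightarrow> 'a) \<Rightarrow> 'a \<Rightarrow> bool" where
  "is_projection st p \<longleftrightarrow> p * p = p \<and> st p = p"

definition star_clean :: "('a::ring_1 \<Rightarrow> 'a) \<Rightarrow> bool" where
  "star_clean st \<longleftrightarrow> (\<forall>a. \<exists>p u. is_projection st p \<and> ring_unit u \<and> a = p + u)"

end

theory Submission
  imports Defs
begin

text \<open>If \<open>2\<close> is invertible with inverse \<open>w\<close>, then \<open>p \<mapsto> 2 p - 1\<close> and
  \<open>t \<mapsto> w (1 + t)\<close> are mutually inverse bijections between projections and symmetric
  involutions (\<open>t\<^sup>2 = 1\<close>, \<open>t\<^sup>* = t\<close>); decomposing \<open>w (a + 1) = p + u\<close> resp.
  \<open>2 a - 1 = t + u\<close> and transporting along them gives both implications, except that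
  \<open>2\<close> must be shown invertible: writing \<open>1 = t + u\<close> forces
  \<open>(1 - t)(1 + t) = 0\<close> with \<open>1 - t\<close> a unit, so \<open>t = -1\<close> and \<open>u = 2\<close>.\<close>

lemma ring_unit_mult:
  assumes "ring_unit (a::'a::ring_1)" "ring_unit b"
  shows "ring_unit (a * b)"
proof -
  obtain c where c: "a * c = 1" "c * a = 1" using assms(1) unfolding ring_unit_def by auto
  obtain d where d: "b * d = 1" "d * b = 1" using assms(2) unfolding ring_unit_def by auto
  have "a * b * (d * c) = 1" "d * c * (a * b) = 1"
    by (simp_all add: mult.assoc[symmetric] c) (simp_all add: mult.assoc c d)
  then show ?thesis unfolding ring_unit_def by blast
qed

lemma inverse_commute_if_commute:
  fixes u v x :: "'a::ring_1"
  assumes "u * v = 1" "v * u = 1" "u * x = x * u"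
  shows "v * x = x * v"
proof -
  have "v * x = v * x * (u * v)" using assms(1) by simp
  also have "\<dots> = v * (u * x) * v" by (simp add: assms(3) mult.assoc)
  finally show ?thesis using assms(2) by (simp flip: mult.assoc)
qed

lemma eq_minus_one_if_square_eq_one_and_unit_one_minus:
  fixes t :: "'a::ring_1"
  assumes "t * t = 1" "ring_unit (1 - t)"
  shows "t = -1"
proof -
  obtain v where v: "v * (1 - t) = 1" using assms(2) unfolding ring_unit_def by auto
  have "(1 - t) * (1 + t) = 0" using assms(1) by (simp add: algebra_simps)
  then have "1 + t = 0" using v by (metis mult.assoc mult_1 mult_zero_right)
  then show ?thesis by (simp add: eq_neg_iff_add_eq_0 add.commute)
qed

lemma ring_involution_one:
  assumes "ring_involution st"
  shows "st (1::'a::ring_1) = 1"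
proof -
  have m: "\<And>x y. st (x * y) = st y * st x" and i: "\<And>x. st (st x) = x"
    using assms unfolding ring_involution_def by auto
  have "st 1 = st (st (st 1 * 1))" by (simp add: i)
  also have "\<dots> = st (st 1 * st (st 1))" by (simp only: m)
  finally show ?thesis by (simp add: i)
qed

lemma ring_involution_diff:
  assumes "ring_involution st"
  shows "st ((x::'a::ring_1) - y) = st x - st y"
  using assms unfolding ring_involution_def by (metis diff_add_cancel eq_diff_eq)

lemma ring_involution_of_nat:
  assumes "ring_involution st"
  shows "st (of_nat n :: 'a::ring_1) = of_nat n"
proof (induction n)
  case 0
  show ?case using ring_involution_diff[OF assms, of 0 0] by simp
next
  case (Suc n)
  then show ?case using assms by (simp add: ring_involution_one ring_involution_def)
qed

lemma ring_involution_inverse_fixed: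
  fixes u v :: "'a::ring_1"
  assumes "ring_involution st" "u * v = 1" "v * u = 1" "st u = u"
  shows "st v = v"
proof -
  have "st v * u = 1"
    using assms ring_involution_one[OF assms(1)] unfolding ring_involution_def by metis
  have "st v = st v * (u * v)" using assms(2) by simp
  also have "\<dots> = v" using \<open>st v * u = 1\<close> by (simp flip: mult.assoc)
  finally show ?thesis .
qed

lemma symmetric_involution_of_projection:
  fixes p :: "'a::ring_1"
  assumes "ring_involution st" "is_projection st p"
  shows "(2 * p - 1) * (2 * p - 1) = 1" "st (2 * p - 1) = 2 * p - 1"
proof -
  have p: "p * p = p" "st p = p" using assms(2) unfolding is_projection_def by auto
  show "(2 * p - 1) * (2 * p - 1) = 1" using p(1) by (simp add: algebra_simps mult_2 mult_2_right)
  have "st 2 = (2::'a)" using ring_involution_of_nat[OF assms(1), of 2] by simp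
  then show "st (2 * p - 1) = 2 * p - 1"
    using assms(1) p(2) mult_of_nat_commute[of 2 p]
    by (simp add: ring_involution_diff ring_involution_one ring_involution_def)
qed

lemma projection_of_symmetric_involution:
  fixes t w :: "'a::ring_1"
  assumes "ring_involution st" "2 * w = 1" "w * 2 = 1" "t * t = 1" "st t = t"
  shows "is_projection st (w * (1 + t))"
proof -
  have w_commute: "w * x = x * w" for x
    using inverse_commute_if_commute[OF assms(2,3)] mult_of_nat_commute[of 2 x] by simp
  have "st w = w"
    using ring_involution_inverse_fixed[OF assms(1-3)] ring_involution_of_nat[OF assms(1), of 2]
    by simp
  have "(1 + t) * (1 + t) = 2 * (1 + t)" using assms(4) by (simp add: algebra_simps mult_2)
  then have "w * (1 + t) * (w * (1 + t)) = (w * 2) * w * (1 + t)"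
    by (metis w_commute mult.assoc)
  moreover have "st (w * (1 + t)) = w * (1 + t)"
    using assms(1,5) \<open>st w = w\<close> w_commute
    by (simp add: ring_involution_one ring_involution_def)
  ultimately show ?thesis using assms(3) unfolding is_projection_def by simp
qed

lemma sum_symmetric_involution_unit_if_star_clean:
  fixes st :: "'a::ring_1 \<Rightarrow> 'a"
  assumes "ring_involution st" "star_clean st" "ring_unit (2::'a)"
  shows "\<exists>t u. t * t = 1 \<and> st t = t \<and> ring_unit u \<and> a = t + u"
proof -
  obtain w where w: "2 * w = 1" "w * 2 = (1::'a)" using assms(3) unfolding ring_unit_def by auto
  obtain p u where pu: "is_projection st p" "ring_unit u" "w * (a + 1) = p + u"
    using assms(2) unfolding star_clean_def by blast
  have "a + 1 = 2 * p + 2 * u"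
    using w(1) by (simp flip: pu(3) mult.assoc add: distrib_left[symmetric])
  then have "a = (2 * p - 1) + 2 * u" by (simp add: algebra_simps)
  then show ?thesis
    using symmetric_involution_of_projection[OF assms(1) pu(1)] ring_unit_mult[OF assms(3) pu(2)]
    by blast
qed

lemma star_clean_if_sum_symmetric_involution_unit:
  fixes st :: "'a::ring_1 \<Rightarrow> 'a"
  assumes "ring_involution st" and sum: "\<And>a. \<exists>t u. t * t = 1 \<and> st t = t \<and> ring_unit u \<and> a = t + u"
  shows "star_clean st" "ring_unit (2::'a)"
proof -
  obtain t u where tu: "t * t = 1" "ring_unit u" "(1::'a) = t + u" using sum by blast
  then have "u = 1 - t" by (simp add: algebra_simps)
  with tu have "t = -1"
    using eq_minus_one_if_square_eq_one_and_unit_one_minus[of t] by simp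
  with tu \<open>u = 1 - t\<close> show "ring_unit (2::'a)" by simp
  then obtain w where w: "2 * w = 1" "w * 2 = (1::'a)" unfolding ring_unit_def by auto
  show "star_clean st" unfolding star_clean_def
  proof
    fix a :: 'a
    obtain t u where tu: "t * t = 1" "st t = t" "ring_unit u" "2 * a - 1 = t + u"
      using sum by blast
    have "ring_unit w" using w unfolding ring_unit_def by auto
    moreover have "a = w * (1 + t) + w * u"
    proof -
      have "a = w * (2 * a)" using w(2) by (simp flip: mult.assoc)
      also have "2 * a = 1 + t + u" using tu(4) by (simp add: algebra_simps)
      finally show ?thesis by (simp add: distrib_left)
    qed
    ultimately show "\<exists>p u. is_projection st p \<and> ring_unit u \<and> a = p + u"
      using projection_of_symmetric_involution[OF assms(1) w tu(1,2)] ring_unit_mult[OF _ tu(3)]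
      by blast
  qed
qed

theorem theorem2p5:
  fixes st :: "'a::ring_1 \<Rightarrow> 'a"
  assumes "ring_involution st"
  shows "(star_clean st \<and> ring_unit (2::'a)) \<longleftrightarrow>
         (\<forall>a. \<exists>t u. t * t = 1 \<and> st t = t \<and> ring_unit u \<and> a = t + u)"
  using sum_symmetric_involution_unit_if_star_clean[OF assms]
    star_clean_if_sum_symmetric_involution_unit[OF assms]
  by blast

end
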